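(* Let $\Lambda=k(\Gamma,\mathcal{A})$ be a generalized path algebra without relations. Let $i\in\Gamma_0$, $1\le j\le s_i$, and let $((M_l)_{l\in\Gamma_0},(\phi_\alpha)_{\alpha\in\Gamma_1})$ be the representation of $P(i,j)=\overline{e_{ij}}\Lambda$. Then: - $M_i=P_i^j=e_{ij}A_i$; - for $l\neq i$, $M_l\cong A_l^{n_l}$ as $A_l$-modules, where $$n_l=\sum_{\gamma:\,i=i_0\to i_1\to\cdots\to i_r=l}(\dim_kP_i^j)(\dim_kA_{i_1})\cdots(\dim_kA_{i_{r-1}}),$$ summed over all paths $\gamma$ from $i$ to $l$ in $\Gamma$. In particular $M_l=0$ if there is no path from $i$ to $l$.
   Context: $k$ is an algebraically closed field, $\Gamma$ a finite acyclic quiver, and $\mathcal{A}=\{A_i:i\in\Gamma_0\}$ finite-dimensional basic $k$-algebras. The generalized path algebra $k(\Gamma,\mathcal{A})$ is spanned by $\mathcal{A}$-paths $a_1\beta_1\cdots a_n\beta_na_{n+1}$ ($\beta_1\cdots\beta_n$ a path of $\Gamma$, $a_i\in A_{s(\beta_i)}$, $a_{n+1}\in A_{e(\beta_n)}$), modulo multilinearity, with concatenation product (multiplying adjacent algebra entries, or $0$ if paths don't compose). For each $i$, $\{e_{i1},\dots,e_{is_i}\}$ is a complete set of primitive pairwise orthogonal idempotents of $A_i$. $P_i^j=e_{ij}A_i$, and $\overline{e_{ij}}$ is the class of $e_{ij}$ in $\Lambda$. The representation of a right $\Lambda$-module $X$ has $X_l=X\cdot1_l$ ($1_l$ the identity of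 $A_l$) and $\phi_\alpha(x)=x\alpha$. *)

theory Defs
  imports "HOL-Computational_Algebra.Polynomial" "HOL-Library.Function_Algebras"
begin

text \<open>A finite-dimensional k-algebra A of dimension d is represented by its basis
  b_0,...,b_(d-1), structure constants c (b_p b_q = sum_m c p q m b_m) and the
  coordinates u of its unit.\<close>

definition vec :: "nat \<Rightarrow> (nat \<Rightarrow> 'k::zero) set" where
  "vec d = {x. \<forall>n\<ge>d. x n = 0}"

definition vzero :: "nat \<Rightarrow> 'k::zero" where "vzero = (\<lambda>_. 0)"

definition vadd :: "('i \<Rightarrow> 'k::plus) \<Rightarrow> ('i \<Rightarrow> 'k) \<Rightarrow> 'i \<Rightarrow> 'k" where
  "vadd x y = (\<lambda>n. x n + y n)"

definition vscale :: "'k::times \<Rightarrow> ('i \<Rightarrow> 'k) \<Rightarrow> 'i \<Rightarrow> 'k" where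
  "vscale c x = (\<lambda>n. c * x n)"

definition amult :: "(nat \<Rightarrow> nat \<Rightarrow> nat \<Rightarrow> 'k::field) \<Rightarrow> nat
    \<Rightarrow> (nat \<Rightarrow> 'k) \<Rightarrow> (nat \<Rightarrow> 'k) \<Rightarrow> (nat \<Rightarrow> 'k)" where
  "amult c d x y = (\<lambda>m. if m < d then (\<Sum>p<d. \<Sum>q<d. x p * y q * c p q m) else 0)"

definition fd_algebra :: "nat \<Rightarrow> (nat \<Rightarrow> nat \<Rightarrow> nat \<Rightarrow> 'k::field) \<Rightarrow> (nat \<Rightarrow> 'k) \<Rightarrow> bool" where
  "fd_algebra d c u \<longleftrightarrow> u \<in> vec d
     \<and> (\<forall>x\<in>vec d. amult c d u x = x \<and> amult c d x u = x)
     \<and> (\<forall>x\<in>vec d. \<forall>y\<in>vec d. \<forall>z\<in>vec d.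
          amult c d (amult c d x y) z = amult c d x (amult c d y z))"

definition idempotent_in :: "nat \<Rightarrow> (nat \<Rightarrow> nat \<Rightarrow> nat \<Rightarrow> 'k::field) \<Rightarrow> (nat \<Rightarrow> 'k) \<Rightarrow> bool" where
  "idempotent_in d c e \<longleftrightarrow> e \<in> vec d \<and> amult c d e e = e"

definition primitive_idempotent :: "nat \<Rightarrow> (nat \<Rightarrow> nat \<Rightarrow> nat \<Rightarrow> 'k::field) \<Rightarrow> (nat \<Rightarrow> 'k) \<Rightarrow> bool" where
  "primitive_idempotent d c e \<longleftrightarrow> idempotent_in d c e \<and> e \<noteq> vzero
     \<and> (\<forall>f g. idempotent_in d c f \<and> idempotent_in d c g
          \<and> amult c d f g = vzero \<and> amult c d g f = vzero \<and> e = vadd f g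
          \<longrightarrow> f = vzero \<or> g = vzero)"

definition complete_prim_orth :: "nat \<Rightarrow> (nat \<Rightarrow> nat \<Rightarrow> nat \<Rightarrow> 'k::field) \<Rightarrow> (nat \<Rightarrow> 'k)
    \<Rightarrow> (nat \<Rightarrow> nat \<Rightarrow> 'k) \<Rightarrow> nat \<Rightarrow> bool" where
  "complete_prim_orth d c u e s \<longleftrightarrow>
     (\<forall>j\<in>{1..s}. primitive_idempotent d c (e j))
     \<and> (\<forall>j\<in>{1..s}. \<forall>j'\<in>{1..s}. j \<noteq> j' \<longrightarrow> amult c d (e j) (e j') = vzero)
     \<and> (\<lambda>n. \<Sum>j=1..s. e j n) = u"

definition rideal :: "nat \<Rightarrow> (nat \<Rightarrow> nat \<Rightarrow> nat \<Rightarrow> 'k::field) \<Rightarrow> (nat \<Rightarrow> 'k) \<Rightarrow> (nat \<Rightarrow> 'k) set" where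
  "rideal d c x = {amult c d x a | a. a \<in> vec d}"

definition rmod_iso :: "nat \<Rightarrow> (nat \<Rightarrow> nat \<Rightarrow> nat \<Rightarrow> 'k::field) \<Rightarrow> (nat \<Rightarrow> 'k) set \<Rightarrow> (nat \<Rightarrow> 'k) set \<Rightarrow> bool" where
  "rmod_iso d c X Y \<longleftrightarrow> (\<exists>h. bij_betw h X Y
     \<and> (\<forall>x\<in>X. \<forall>y\<in>X. h (vadd x y) = vadd (h x) (h y))
     \<and> (\<forall>k x. x \<in> X \<longrightarrow> h (vscale k x) = vscale k (h x))
     \<and> (\<forall>a\<in>vec d. \<forall>x\<in>X. h (amult c d x a) = amult c d (h x) a))"

definition basic_algebra :: "nat \<Rightarrow> (nat \<Rightarrow> nat \<Rightarrow> nat \<Rightarrow> 'k::field) \<Rightarrow> (nat \<Rightarrow> nat \<Rightarrow> 'k) \<Rightarrow> nat \<Rightarrow> bool" where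
  "basic_algebra d c e s \<longleftrightarrow> (\<forall>j\<in>{1..s}. \<forall>j'\<in>{1..s}. j \<noteq> j' \<longrightarrow>
      \<not> rmod_iso d c (rideal d c (e j)) (rideal d c (e j')))"

definition kdim :: "(nat \<Rightarrow> 'k::field) set \<Rightarrow> nat" where
  "kdim S = vector_space.dim (vscale :: 'k \<Rightarrow> (nat \<Rightarrow> 'k) \<Rightarrow> _) S"

fun qpath :: "'v set \<Rightarrow> 'e set \<Rightarrow> ('e \<Rightarrow> 'v) \<Rightarrow> ('e \<Rightarrow> 'v) \<Rightarrow> 'v \<Rightarrow> 'e list \<Rightarrow> bool" where
  "qpath V E src tgt v [] = (v \<in> V)"
| "qpath V E src tgt v (b # bs) = (v \<in> V \<and> b \<in> E \<and> src b = v \<and> qpath V E src tgt (tgt b) bs)"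

fun pend :: "('e \<Rightarrow> 'v) \<Rightarrow> 'v \<Rightarrow> 'e list \<Rightarrow> 'v" where
  "pend tgt v [] = v"
| "pend tgt v (b # bs) = pend tgt (tgt b) bs"

fun pverts :: "('e \<Rightarrow> 'v) \<Rightarrow> 'v \<Rightarrow> 'e list \<Rightarrow> 'v list" where
  "pverts tgt v [] = [v]"
| "pverts tgt v (b # bs) = v # pverts tgt (tgt b) bs"

definition finite_quiver :: "'v set \<Rightarrow> 'e set \<Rightarrow> ('e \<Rightarrow> 'v) \<Rightarrow> ('e \<Rightarrow> 'v) \<Rightarrow> bool" where
  "finite_quiver V E src tgt \<longleftrightarrow> finite V \<and> finite E \<and> src ` E \<subseteq> V \<and> tgt ` E \<subseteq> V"

definition acyclic_quiver :: "'v set \<Rightarrow> 'e set \<Rightarrow> ('e \<Rightarrow> 'v) \<Rightarrow> ('e \<Rightarrow> 'v) \<Rightarrow> bool" where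
  "acyclic_quiver V E src tgt \<longleftrightarrow>
     (\<forall>v bs. qpath V E src tgt v bs \<and> bs \<noteq> [] \<longrightarrow> pend tgt v bs \<noteq> v)"

text \<open>Lambda is the direct sum over paths gamma = beta_1...beta_r (from i_0 to i_r) of
  A_(i_0) (x) A_(i_1) (x) ... (x) A_(i_r), i.e. the span of A-paths modulo multilinearity.
  A basis index (v, betas, bs) is a path starting at v together with basis indices
  bs!t of A_(i_t), t = 0..r (an elementary tensor of basis elements).\<close>

definition gp_index :: "'v set \<Rightarrow> 'e set \<Rightarrow> ('e \<Rightarrow> 'v) \<Rightarrow> ('e \<Rightarrow> 'v) \<Rightarrow> ('v \<Rightarrow> nat)
    \<Rightarrow> ('v \<times> 'e list \<times> nat list) set" where
  "gp_index V E src tgt dA = {(v, bs, ns). qpath V E src tgt v bs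
     \<and> length ns = length bs + 1 \<and> (\<forall>t<length ns. ns ! t < dA (pverts tgt v bs ! t))}"

definition gp_carrier :: "'v set \<Rightarrow> 'e set \<Rightarrow> ('e \<Rightarrow> 'v) \<Rightarrow> ('e \<Rightarrow> 'v) \<Rightarrow> ('v \<Rightarrow> nat)
    \<Rightarrow> ('v \<times> 'e list \<times> nat list \<Rightarrow> 'k::zero) set" where
  "gp_carrier V E src tgt dA = {x. \<forall>K. K \<notin> gp_index V E src tgt dA \<longrightarrow> x K = 0}"

text \<open>Coefficient of basis element K in the product of basis elements I and J:
  (a_0 b_1 ... b_r a_r)(a'_0 c_1 ... c_s a'_s) = a_0 b_1 ... b_r (a_r a'_0) c_1 ... c_s a'_s
  if the paths compose, and 0 otherwise.\<close>
definition gp_bprod :: "('e \<Rightarrow> 'v) \<Rightarrow> ('v \<Rightarrow> nat \<Rightarrow> nat \<Rightarrow> nat \<Rightarrow> 'k::field)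
    \<Rightarrow> ('v \<times> 'e list \<times> nat list) \<Rightarrow> ('v \<times> 'e list \<times> nat list) \<Rightarrow> ('v \<times> 'e list \<times> nat list) \<Rightarrow> 'k" where
  "gp_bprod tgt cA I J K = (case (I, J, K) of ((v, bs, ns), (w, cs, ms), (u, gs, ls)) \<Rightarrow>
     (if pend tgt v bs = w \<and> u = v \<and> gs = bs @ cs
         \<and> length ls = length ns + length ms - 1
         \<and> take (length ns - 1) ls = butlast ns \<and> drop (length ns) ls = tl ms
      then cA w (last ns) (hd ms) (ls ! (length ns - 1)) else 0))"

definition gp_mult :: "'v set \<Rightarrow> 'e set \<Rightarrow> ('e \<Rightarrow> 'v) \<Rightarrow> ('e \<Rightarrow> 'v) \<Rightarrow> ('v \<Rightarrow> nat)
    \<Rightarrow> ('v \<Rightarrow> nat \<Rightarrow> nat \<Rightarrow> nat \<Rightarrow> 'k::field)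
    \<Rightarrow> ('v \<times> 'e list \<times> nat list \<Rightarrow> 'k) \<Rightarrow> ('v \<times> 'e list \<times> nat list \<Rightarrow> 'k)
    \<Rightarrow> ('v \<times> 'e list \<times> nat list \<Rightarrow> 'k)" where
  "gp_mult V E src tgt dA cA x y = (\<lambda>K. if K \<in> gp_index V E src tgt dA then
     (\<Sum>I\<in>gp_index V E src tgt dA. \<Sum>J\<in>gp_index V E src tgt dA. x I * y J * gp_bprod tgt cA I J K)
     else 0)"

text \<open>Canonical embedding of A_l into Lambda (as trivial A-paths at l).\<close>
definition gp_emb :: "('v \<Rightarrow> nat) \<Rightarrow> 'v \<Rightarrow> (nat \<Rightarrow> 'k::zero) \<Rightarrow> ('v \<times> 'e list \<times> nat list \<Rightarrow> 'k)" where
  "gp_emb dA l a = (\<lambda>(u, gs, ls). if u = l \<and> gs = [] \<and> length ls = 1 \<and> hd ls < dA l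
                                   then a (hd ls) else 0)"

definition gp_proj :: "'v set \<Rightarrow> 'e set \<Rightarrow> ('e \<Rightarrow> 'v) \<Rightarrow> ('e \<Rightarrow> 'v) \<Rightarrow> ('v \<Rightarrow> nat)
    \<Rightarrow> ('v \<Rightarrow> nat \<Rightarrow> nat \<Rightarrow> nat \<Rightarrow> 'k::field) \<Rightarrow> ('v \<Rightarrow> nat \<Rightarrow> nat \<Rightarrow> 'k) \<Rightarrow> 'v \<Rightarrow> nat
    \<Rightarrow> ('v \<times> 'e list \<times> nat list \<Rightarrow> 'k) set" where
  "gp_proj V E src tgt dA cA e i j =
     {gp_mult V E src tgt dA cA (gp_emb dA i (e i j)) y | y. y \<in> gp_carrier V E src tgt dA}"

text \<open>Vertex component X_l = X 1_l of the representation of a right Lambda-module X;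
  it is a right A_l-module via x . a = x a (a viewed in Lambda).\<close>
definition rep_component :: "'v set \<Rightarrow> 'e set \<Rightarrow> ('e \<Rightarrow> 'v) \<Rightarrow> ('e \<Rightarrow> 'v) \<Rightarrow> ('v \<Rightarrow> nat)
    \<Rightarrow> ('v \<Rightarrow> nat \<Rightarrow> nat \<Rightarrow> nat \<Rightarrow> 'k::field) \<Rightarrow> ('v \<Rightarrow> nat \<Rightarrow> 'k)
    \<Rightarrow> ('v \<times> 'e list \<times> nat list \<Rightarrow> 'k) set \<Rightarrow> 'v \<Rightarrow> ('v \<times> 'e list \<times> nat list \<Rightarrow> 'k) set" where
  "rep_component V E src tgt dA cA uA X l =
     {gp_mult V E src tgt dA cA x (gp_emb dA l (uA l)) | x. x \<in> X}"

definition free_rmod :: "nat \<Rightarrow> nat \<Rightarrow> (nat \<Rightarrow> nat \<Rightarrow> 'k::zero) set" where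
  "free_rmod d n = {F. (\<forall>t<n. F t \<in> vec d) \<and> (\<forall>t\<ge>n. F t = vzero)}"

end

theory Submission
  imports Defs
begin

text \<open>The path algebra has a basis of elementary tensors indexed by a path
  \<open>i\<^sub>0 \<rightarrow> \<dots> \<rightarrow> i\<^sub>r\<close> together with basis indices \<open>n\<^sub>0, \<dots>, n\<^sub>r\<close> of \<open>A\<^sub>i\<^sub>0, \<dots>, A\<^sub>i\<^sub>r\<close>.
  Left multiplication by \<open>e\<^sub>i\<^sub>j\<close> acts on the first tensor factor only, and right multiplication
  by \<open>1\<^sub>l\<close> keeps exactly the paths ending in \<open>l\<close>. Hence \<open>M\<^sub>l\<close> consists of the elements supported
  on paths from \<open>i\<close> to \<open>l\<close> whose first factor lies in \<open>e\<^sub>i\<^sub>jA\<^sub>i\<close>. For \<open>l = i\<close> acyclicity leaves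
  only the trivial path. For \<open>l \<noteq> i\<close> the algebra \<open>A\<^sub>l\<close> acts on the last factor only, so a
  \<open>k\<close>-basis of \<open>e\<^sub>i\<^sub>jA\<^sub>i\<close> identifies \<open>M\<^sub>l\<close> with the free \<open>A\<^sub>l\<close>-module on the triples
  (path, basis vector, basis indices at the inner vertices of the path).\<close>

section \<open>Paths in a quiver\<close>

context
  fixes V :: "'v set" and E :: "'e set" and src tgt :: "'e \<Rightarrow> 'v"
begin

lemma qpath_start_in: "qpath V E src tgt v bs \<Longrightarrow> v \<in> V"
  by (cases bs) auto

lemma qpath_append:
  "qpath V E src tgt v (xs @ ys) \<longleftrightarrow> qpath V E src tgt v xs \<and> qpath V E src tgt (pend tgt v xs) ys"
  by (induction xs arbitrary: v) (auto dest: qpath_start_in)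

lemma pend_append: "pend tgt v (xs @ ys) = pend tgt (pend tgt v xs) ys"
  by (induction xs arbitrary: v) auto

lemma length_pverts [simp]: "length (pverts tgt v bs) = Suc (length bs)"
  by (induction bs arbitrary: v) auto

lemma pverts_nth: "a \<le> length bs \<Longrightarrow> pverts tgt v bs ! a = pend tgt v (take a bs)"
  by (induction bs arbitrary: v a) (auto simp: nth_Cons split: nat.splits)

lemma pverts_nth_0 [simp]: "pverts tgt v bs ! 0 = v"
  by (cases bs) auto

lemma pverts_nth_length: "pverts tgt v bs ! length bs = pend tgt v bs"
  by (simp add: pverts_nth)

lemma qpath_edges: "qpath V E src tgt v bs \<Longrightarrow> set bs \<subseteq> E"
  by (induction bs arbitrary: v) auto

lemma qpath_pverts: "qpath V E src tgt v bs \<Longrightarrow> set (pverts tgt v bs) \<subseteq> V"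
  by (induction bs arbitrary: v) auto

lemma distinct_pverts:
  assumes acyclic: "acyclic_quiver V E src tgt" and p: "qpath V E src tgt v bs"
  shows "distinct (pverts tgt v bs)"
proof (rule ccontr)
  assume "\<not> distinct (pverts tgt v bs)"
  then obtain a b where ab: "a < b" "b \<le> length bs" "pverts tgt v bs ! a = pverts tgt v bs ! b"
    by (auto simp: distinct_conv_nth less_Suc_eq_le) (metis linorder_neqE_nat)
  define w where "w = pend tgt v (take a bs)"
  define loop where "loop = drop a (take b bs)"
  have "take b bs = take a bs @ loop"
    using ab by (simp add: loop_def) (metis append_take_drop_id min.strict_order_iff take_take)
  moreover have "bs = take b bs @ drop b bs" by simp
  ultimately have "qpath V E src tgt w loop"
    using p qpath_append w_def by metis
  moreover have "loop \<noteq> []" using ab by (simp add: loop_def)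
  moreover have "pend tgt w loop = w"
    using ab \<open>take b bs = take a bs @ loop\<close> by (simp add: pverts_nth pend_append w_def)
  ultimately show False using acyclic by (auto simp: acyclic_quiver_def)
qed

lemma length_qpath_le_card:
  assumes quiver: "finite_quiver V E src tgt" and acyclic: "acyclic_quiver V E src tgt"
    and p: "qpath V E src tgt v bs"
  shows "length bs \<le> card V"
proof -
  have "card (set (pverts tgt v bs)) \<le> card V"
    using qpath_pverts[OF p] quiver by (intro card_mono) (auto simp: finite_quiver_def)
  then show ?thesis using distinct_pverts[OF acyclic p] distinct_card by fastforce
qed

lemma finite_qpaths:
  assumes "finite_quiver V E src tgt" and "acyclic_quiver V E src tgt"
  shows "finite {bs. qpath V E src tgt v bs}"
proof (rule finite_subset)
  show "{bs. qpath V E src tgt v bs} \<subseteq> {bs. set bs \<subseteq> E \<and> length bs \<le> card V}"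
    using assms qpath_edges length_qpath_le_card by blast
  show "finite {bs. set bs \<subseteq> E \<and> length bs \<le> card V}"
    using assms(1) by (intro finite_lists_length_le) (auto simp: finite_quiver_def)
qed

end


section \<open>Coordinate vectors and finite-dimensional algebras\<close>

lemma sum_apply: "(\<Sum>k\<in>A. f k) x = (\<Sum>k\<in>A. f k x :: 'b::comm_monoid_add)"
  by (induction A rule: infinite_finite_induct) auto

lemma sum_reindex_support:
  assumes "finite S" and "inj_on h A" and "h ` A \<subseteq> S"
    and "\<And>x. x \<in> S \<Longrightarrow> x \<notin> h ` A \<Longrightarrow> G x = 0"
  shows "sum G S = (\<Sum>a\<in>A. G (h a))"
proof -
  have "sum G S = sum G (h ` A)"
    using assms by (intro sum.mono_neutral_right) auto
  also have "\<dots> = (\<Sum>a\<in>A. G (h a))"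
    using assms(2) by (simp add: sum.reindex)
  finally show ?thesis .
qed

interpretation vs: vector_space "vscale :: 'k::field \<Rightarrow> (nat \<Rightarrow> 'k) \<Rightarrow> nat \<Rightarrow> 'k"
  by unfold_locales (auto simp: vscale_def fun_eq_iff algebra_simps)

lemma kdim_eq_dim: "kdim S = vs.dim S"
  by (simp add: kdim_def)

lemma amult_in_vec: "amult c d x y \<in> vec d"
  by (simp add: amult_def vec_def)

lemma amult_cong:
  "(\<And>p. p < d \<Longrightarrow> x p = x' p) \<Longrightarrow> (\<And>p. p < d \<Longrightarrow> y p = y' p) \<Longrightarrow> amult c d x y = amult c d x' y'"
  by (auto simp: amult_def fun_eq_iff intro!: sum.cong)

lemma amult_add_right: "amult c d x (a + b) = amult c d x a + amult c d x b"
  by (simp add: amult_def fun_eq_iff algebra_simps sum.distrib)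

lemma amult_vscale_right: "amult c d x (vscale k a) = vscale k (amult c d x a)"
  by (simp add: amult_def fun_eq_iff vscale_def sum_distrib_left algebra_simps)

lemma amult_zero_right: "amult c d x 0 = 0"
  by (simp add: amult_def fun_eq_iff)

lemma amult_in_rideal: "amult c d x a \<in> rideal d c x"
proof -
  have "amult c d x a = amult c d x (\<lambda>n. if n < d then a n else 0)"
    by (rule amult_cong) auto
  moreover have "(\<lambda>n. if n < d then a n else 0) \<in> vec d"
    by (simp add: vec_def)
  ultimately show ?thesis unfolding rideal_def by blast
qed

lemma rideal_subset_vec: "rideal d c x \<subseteq> vec d"
  by (auto simp: rideal_def amult_in_vec)

lemma subspace_rideal: "vs.subspace (rideal d c (x :: nat \<Rightarrow> 'k::field))"
  unfolding vs.subspace_def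
proof (intro conjI ballI allI)
  show "0 \<in> rideal d c x"
    using amult_in_rideal[of c d x 0] by (simp add: amult_zero_right)
  fix p q assume "p \<in> rideal d c x" "q \<in> rideal d c x"
  then obtain a b where "p = amult c d x a" "q = amult c d x b"
    by (auto simp: rideal_def)
  then show "p + q \<in> rideal d c x"
    using amult_in_rideal[of c d x "a + b"] by (simp add: amult_add_right)
next
  fix k p assume "p \<in> rideal d c x"
  then obtain a where "p = amult c d x a"
    by (auto simp: rideal_def)
  then show "vscale k p \<in> rideal d c x"
    using amult_in_rideal[of c d x "vscale k a"] by (simp add: amult_vscale_right)
qed

lemma vec_subset_span_units:
  "vec d \<subseteq> vs.span ((\<lambda>k n. if n = k then 1 else 0 :: 'k::field) ` {..<d})"
proof
  fix x :: "nat \<Rightarrow> 'k" assume x: "x \<in> vec d"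
  have "x = (\<Sum>k<d. vscale (x k) (\<lambda>n. if n = k then 1 else 0))"
  proof
    fix n
    have "(\<Sum>k<d. vscale (x k) (\<lambda>n. if n = k then 1 else 0)) n = (\<Sum>k<d. if n = k then x k else 0)"
      by (simp add: sum_apply vscale_def if_distrib cong: if_cong)
    also have "\<dots> = x n"
      using x by (cases "n < d") (auto simp: vec_def)
    finally show "x n = (\<Sum>k<d. vscale (x k) (\<lambda>n. if n = k then 1 else 0)) n" by simp
  qed
  also have "\<dots> \<in> vs.span ((\<lambda>k n. if n = k then 1 else 0) ` {..<d})"
    by (intro vs.span_sum vs.span_scale vs.span_base) auto
  finally show "x \<in> vs.span ((\<lambda>k n. if n = k then 1 else 0) ` {..<d})" .
qed

lemma subspace_vec_obtain_basis:
  fixes S :: "(nat \<Rightarrow> 'k::field) set"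
  assumes "vs.subspace S" and "S \<subseteq> vec d"
  obtains B where "finite B" "B \<subseteq> S" "vs.independent B" "S = vs.span B" "card B = kdim S"
proof -
  obtain B where B: "B \<subseteq> S" "vs.independent B" "S \<subseteq> vs.span B" "card B = vs.dim S"
    using vs.basis_exists by blast
  have "finite B"
    using vs.independent_span_bound[OF _ B(2)] B(1) assms(2) vec_subset_span_units by blast
  moreover have "S = vs.span B"
    using B assms(1) vs.span_minimal by blast
  ultimately show ?thesis
    using that B by (simp add: kdim_eq_dim)
qed

lemma idempotent_fixes_rideal:
  assumes "fd_algebra d c u" and "idempotent_in d c e" and "p \<in> rideal d c e"
  shows "amult c d e p = p"
proof -
  obtain a where a: "p = amult c d e a" "a \<in> vec d"
    using assms(3) by (auto simp: rideal_def)
  have "amult c d e (amult c d e a) = amult c d (amult c d e e) a"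
    using assms(1,2) a(2) unfolding fd_algebra_def idempotent_in_def by metis
  then show ?thesis
    using assms(2) a(1) by (simp add: idempotent_in_def)
qed

lemma card_lists_bounded:
  "finite {ms. length ms = N \<and> (\<forall>t<N. ms ! t < h t)}
   \<and> card {ms. length ms = N \<and> (\<forall>t<N. ms ! t < h t)} = (\<Prod>t<N. h t)"
proof (induction N)
  case 0
  have "{ms. length ms = 0 \<and> (\<forall>t<0. ms ! t < h t)} = {[]}" by auto
  then show ?case by simp
next
  case (Suc N)
  let ?S = "\<lambda>N. {ms. length ms = N \<and> (\<forall>t<N. ms ! t < h t)}"
  have snoc: "?S (Suc N) = (\<lambda>(ms, x). ms @ [x]) ` (?S N \<times> {..<h N})"
  proof (intro set_eqI iffI)
    fix ms assume "ms \<in> ?S (Suc N)"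
    then have ms: "length ms = Suc N" "\<forall>t<Suc N. ms ! t < h t" by auto
    then obtain xs x where "ms = xs @ [x]"
      by (cases ms rule: rev_cases) auto
    moreover have "x < h N"
      using ms \<open>ms = xs @ [x]\<close> by (auto dest: spec[of _ N])
    moreover have "xs \<in> ?S N"
    proof (intro CollectI conjI allI impI)
      show "length xs = N" using ms \<open>ms = xs @ [x]\<close> by simp
      fix t assume "t < N"
      moreover have "ms ! t = xs ! t"
        using \<open>t < N\<close> ms \<open>ms = xs @ [x]\<close> by (simp add: nth_append)
      ultimately show "xs ! t < h t"
        using ms(2)[rule_format, of t] by simp
    qed
    ultimately show "ms \<in> (\<lambda>(ms, x). ms @ [x]) ` (?S N \<times> {..<h N})"
      by (intro image_eqI[of _ _ "(xs, x)"]) auto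
  qed (auto simp: nth_append less_Suc_eq)
  have "inj_on (\<lambda>(ms, x). ms @ [x]) (?S N \<times> {..<h N})"
    by (auto simp: inj_on_def)
  then show ?case
    unfolding snoc using Suc by (simp add: card_image card_cartesian_product)
qed

context vector_space
begin

lemma representation_inj_on_span:
  assumes "finite B" "independent B" "v \<in> span B" "w \<in> span B"
    and "\<And>b. b \<in> B \<Longrightarrow> representation B v b = representation B w b"
  shows "v = w"
  using sum_representation_eq[OF assms(2) assms(3) assms(1) order_refl]
    sum_representation_eq[OF assms(2) assms(4) assms(1) order_refl] assms(5)
  by (metis (no_types, lifting) sum.cong)

lemma representation_lincomb:
  assumes "independent B" "\<And>p. p \<in> I \<Longrightarrow> v p \<in> span B"
  shows "representation B (\<Sum>p\<in>I. c p *s v p) b = (\<Sum>p\<in>I. c p * representation B (v p) b)"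
  using representation_sum[OF assms(1), of I "\<lambda>p. c p *s v p"] assms
  by (simp add: span_scale representation_scale)

lemma representation_sum_scale:
  assumes "finite B" "independent B"
  shows "representation B (\<Sum>b\<in>B. c b *s b) b' = (if b' \<in> B then c b' else 0)"
proof -
  have "representation B (\<Sum>b\<in>B. c b *s b) b' = (\<Sum>b\<in>B. representation B (c b *s b) b')"
    using representation_sum[OF assms(2), of B "\<lambda>b. c b *s b"] by (simp add: span_scale span_base)
  also have "\<dots> = (\<Sum>b\<in>B. c b * (if b' = b then 1 else 0))"
    by (intro sum.cong refl) (simp add: representation_scale[OF assms(2)] span_base representation_basis[OF assms(2)])
  also have "\<dots> = (if b' \<in> B then c b' else 0)"
    using assms(1) by (simp add: if_distrib cong: if_cong)
  finally show ?thesis .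
qed

end

section \<open>Multiplication by vertex algebras in the generalized path algebra\<close>

locale gen_path_algebra =
  fixes V :: "'v set" and E :: "'e set" and src tgt :: "'e \<Rightarrow> 'v"
    and dA :: "'v \<Rightarrow> nat" and cA :: "'v \<Rightarrow> nat \<Rightarrow> nat \<Rightarrow> nat \<Rightarrow> 'k::field"
    and uA :: "'v \<Rightarrow> nat \<Rightarrow> 'k"
  assumes quiver: "finite_quiver V E src tgt"
    and acyclic: "acyclic_quiver V E src tgt"
    and algebras: "\<forall>v\<in>V. fd_algebra (dA v) (cA v) (uA v)"
begin

abbreviation "Idx \<equiv> gp_index V E src tgt dA"
abbreviation "Car \<equiv> gp_carrier V E src tgt dA"
abbreviation "pmult \<equiv> gp_mult V E src tgt dA cA"

lemma gp_index_iff: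
  "(v, bs, ns) \<in> Idx \<longleftrightarrow> qpath V E src tgt v bs \<and> length ns = length bs + 1
     \<and> (\<forall>t<length ns. ns ! t < dA (pverts tgt v bs ! t))"
  by (simp add: gp_index_def)

lemma finite_gp_index: "finite Idx"
proof (rule finite_subset)
  define N where "N = (\<Sum>v\<in>V. dA v)"
  have fin: "finite V" "finite E"
    using quiver by (auto simp: finite_quiver_def)
  show "finite (V \<times> {bs. set bs \<subseteq> E \<and> length bs \<le> card V}
      \<times> {ns. set ns \<subseteq> {..<N} \<and> length ns \<le> Suc (card V)})"
    using fin by (intro finite_cartesian_product finite_lists_length_le) auto
  show "Idx \<subseteq> V \<times> {bs. set bs \<subseteq> E \<and> length bs \<le> card V}
      \<times> {ns. set ns \<subseteq> {..<N} \<and> length ns \<le> Suc (card V)}"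
  proof
    fix K assume "K \<in> Idx"
    then obtain v bs ns where K: "K = (v, bs, ns)" and p: "qpath V E src tgt v bs"
      and len: "length ns = length bs + 1"
      and bound: "\<forall>t<length ns. ns ! t < dA (pverts tgt v bs ! t)"
      by (cases K) (auto simp: gp_index_iff)
    have "set ns \<subseteq> {..<N}"
    proof
      fix x assume "x \<in> set ns"
      then obtain t where t: "t < length ns" "x = ns ! t"
        by (auto simp: in_set_conv_nth)
      have "pverts tgt v bs ! t \<in> V"
        using qpath_pverts[OF p] t len by (auto simp: set_conv_nth)
      then have "dA (pverts tgt v bs ! t) \<le> N"
        unfolding N_def using fin by (intro member_le_sum) auto
      then show "x \<in> {..<N}" using bound t by force
    qed
    then show "K \<in> V \<times> {bs. set bs \<subseteq> E \<and> length bs \<le> card V}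
        \<times> {ns. set ns \<subseteq> {..<N} \<and> length ns \<le> Suc (card V)}"
      using qpath_start_in[OF p] qpath_edges[OF p] length_qpath_le_card[OF quiver acyclic p] len
      by (auto simp: K)
  qed
qed

lemma gp_bprod_simp:
  "gp_bprod tgt cA (v, bs, ns) (w, cs, ms) (u, gs, ls) =
     (if pend tgt v bs = w \<and> u = v \<and> gs = bs @ cs
         \<and> length ls = length ns + length ms - 1
         \<and> take (length ns - 1) ls = butlast ns \<and> drop (length ns) ls = tl ms
      then cA w (last ns) (hd ms) (ls ! (length ns - 1)) else 0)"
  by (simp add: gp_bprod_def)

lemma gp_emb_simp:
  "gp_emb dA l a (u, gs, ls) =
     (if u = l \<and> gs = [] \<and> length ls = 1 \<and> hd ls < dA l then a (hd ls) else 0)"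
  by (simp add: gp_emb_def)

lemma gp_mult_outside: "K \<notin> Idx \<Longrightarrow> pmult x y K = 0"
  by (simp add: gp_mult_def)

lemma sum_gp_emb:
  fixes G :: "'v \<times> 'e list \<times> nat list \<Rightarrow> 'k"
  assumes "l \<in> V"
  shows "(\<Sum>I\<in>Idx. gp_emb dA l a I * G I) = (\<Sum>p<dA l. a p * G (l, [], [p]))"
proof -
  have trivial_paths: "(\<lambda>p. (l, [], [p])) ` {..<dA l} \<subseteq> Idx"
    using assms by (auto simp: gp_index_iff)
  have "(\<Sum>I\<in>Idx. gp_emb dA l a I * G I) = (\<Sum>p<dA l. gp_emb dA l a (l, [] :: 'e list, [p]) * G (l, [], [p]))"
  proof (rule sum_reindex_support[OF finite_gp_index _ trivial_paths])
    show "inj_on (\<lambda>p. (l, [], [p])) {..<dA l}" by (auto simp: inj_on_def)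
    fix I assume "I \<in> Idx" "I \<notin> (\<lambda>p. (l, [], [p])) ` {..<dA l}"
    then show "gp_emb dA l a I * G I = 0"
      by (cases I) (auto simp: gp_emb_simp length_Suc_conv)
  qed
  then show ?thesis by (simp add: gp_emb_simp)
qed


lemma sum_gp_bprod_trivial_left:
  fixes y :: "'v \<times> 'e list \<times> nat list \<Rightarrow> 'k"
  assumes K: "(u, gs, ls) \<in> Idx"
  shows "(\<Sum>J\<in>Idx. y J * gp_bprod tgt cA (l, [], [p]) J (u, gs, ls))
    = (if u = l then \<Sum>q<dA l. y (l, gs, q # tl ls) * cA l p q (hd ls) else 0)"
proof (cases "u = l")
  case False
  then show ?thesis
    by (auto simp: gp_bprod_def split: prod.splits intro!: sum.neutral)
next
  case True
  from K True have p: "qpath V E src tgt l gs" and len: "length ls = length gs + 1"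
    and bound: "\<forall>t<length ls. ls ! t < dA (pverts tgt l gs ! t)"
    by (auto simp: gp_index_iff)
  have ls_ne: "ls \<noteq> []"
    using len by auto
  then have ls: "ls = hd ls # tl ls"
    by simp
  let ?h = "\<lambda>q. (l, gs, q # tl ls)"
  have in_Idx: "?h ` {..<dA l} \<subseteq> Idx"
  proof clarify
    fix q assume q: "q < dA l"
    have "\<forall>t<length ls. (q # tl ls) ! t < dA (pverts tgt l gs ! t)"
      using q bound ls by (auto simp: nth_Cons' nth_tl)
    then show "(l, gs, q # tl ls) \<in> Idx"
      using p len ls by (simp add: gp_index_iff)
  qed
  have "(\<Sum>J\<in>Idx. y J * gp_bprod tgt cA (l, [], [p]) J (u, gs, ls))
      = (\<Sum>q<dA l. y (?h q) * gp_bprod tgt cA (l, [], [p]) (?h q) (u, gs, ls))"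
  proof (rule sum_reindex_support[OF finite_gp_index _ in_Idx])
    show "inj_on ?h {..<dA l}" by (auto simp: inj_on_def)
    fix J assume J: "J \<in> Idx" "J \<notin> ?h ` {..<dA l}"
    obtain w cs ms where J_eq: "J = (w, cs, ms)" by (cases J)
    show "y J * gp_bprod tgt cA (l, [], [p]) J (u, gs, ls) = 0"
    proof (rule ccontr)
      assume "y J * gp_bprod tgt cA (l, [], [p]) J (u, gs, ls) \<noteq> 0"
      then have "w = l" "cs = gs" "tl ms = tl ls"
        using True by (auto simp: J_eq gp_bprod_simp drop_Suc split: if_splits)
      moreover have "ms = hd ms # tl ms" "hd ms < dA l"
        using J \<open>w = l\<close> by (cases ms; auto simp: J_eq gp_index_iff)+
      ultimately have "J = ?h (hd ms)"
        by (simp add: J_eq)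
      with J \<open>hd ms < dA l\<close> show False by auto
    qed
  qed
  also have "\<dots> = (\<Sum>q<dA l. y (?h q) * cA l p q (hd ls))"
    using True len ls_ne by (intro sum.cong refl) (simp add: gp_bprod_simp drop_Suc hd_conv_nth)
  finally show ?thesis using True by simp
qed


lemma sum_gp_bprod_trivial_right:
  fixes x :: "'v \<times> 'e list \<times> nat list \<Rightarrow> 'k"
  assumes K: "(u, gs, ls) \<in> Idx"
  shows "(\<Sum>I\<in>Idx. x I * gp_bprod tgt cA I (l, [], [m]) (u, gs, ls))
    = (if pend tgt u gs = l then \<Sum>p<dA l. x (u, gs, butlast ls @ [p]) * cA l p m (last ls) else 0)"
proof (cases "pend tgt u gs = l")
  case False
  then show ?thesis
    by (auto simp: gp_bprod_def split: prod.splits intro!: sum.neutral)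
next
  case True
  from K have p: "qpath V E src tgt u gs" and len: "length ls = length gs + 1"
    and bound: "\<forall>t<length ls. ls ! t < dA (pverts tgt u gs ! t)"
    by (auto simp: gp_index_iff)
  have ls_ne: "ls \<noteq> []"
    using len by auto
  let ?h = "\<lambda>p. (u, gs, butlast ls @ [p])"
  have in_Idx: "?h ` {..<dA l} \<subseteq> Idx"
  proof clarify
    fix q assume q: "q < dA l"
    have "(butlast ls @ [q]) ! t < dA (pverts tgt u gs ! t)" if "t < length ls" for t
    proof (cases "t < length gs")
      case True
      then show ?thesis using bound len by (simp add: nth_append nth_butlast)
    next
      case False
      then have "t = length gs" using that len by simp
      then show ?thesis using q \<open>pend tgt u gs = l\<close> len by (simp add: nth_append pverts_nth_length)
    qed
    then show "(u, gs, butlast ls @ [q]) \<in> Idx"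
      using p len ls_ne by (simp add: gp_index_iff)
  qed
  have "(\<Sum>I\<in>Idx. x I * gp_bprod tgt cA I (l, [], [m]) (u, gs, ls))
      = (\<Sum>p<dA l. x (?h p) * gp_bprod tgt cA (?h p) (l, [], [m]) (u, gs, ls))"
  proof (rule sum_reindex_support[OF finite_gp_index _ in_Idx])
    show "inj_on ?h {..<dA l}" by (auto simp: inj_on_def)
    fix I assume I: "I \<in> Idx" "I \<notin> ?h ` {..<dA l}"
    obtain v bs ns where I_eq: "I = (v, bs, ns)" by (cases I)
    from I have len_ns: "length ns = length bs + 1"
      and bound_ns: "\<forall>t<length ns. ns ! t < dA (pverts tgt v bs ! t)"
      by (auto simp: I_eq gp_index_iff)
    show "x I * gp_bprod tgt cA I (l, [], [m]) (u, gs, ls) = 0"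
    proof (rule ccontr)
      assume "x I * gp_bprod tgt cA I (l, [], [m]) (u, gs, ls) \<noteq> 0"
      then have c: "pend tgt v bs = l" "u = v" "gs = bs" "length ls = length ns"
        "take (length ns - 1) ls = butlast ns"
        by (auto simp: I_eq gp_bprod_simp split: if_splits)
      have ns_ne: "ns \<noteq> []" using len_ns by auto
      have "ns = butlast ls @ [last ns]"
        using c ns_ne by (metis append_butlast_last_id butlast_conv_take)
      moreover have "last ns < dA l"
        using bound_ns[rule_format, of "length bs"] len_ns c ns_ne
        by (simp add: last_conv_nth pverts_nth_length)
      ultimately have "I \<in> ?h ` {..<dA l}" using c by (auto simp: I_eq)
      with I show False by simp
    qed
  qed
  also have "\<dots> = (\<Sum>p<dA l. x (?h p) * cA l p m (last ls))"
    using True len ls_ne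
    by (intro sum.cong refl) (simp add: gp_bprod_simp last_conv_nth butlast_conv_take)
  finally show ?thesis using True by simp
qed


lemma pmult_emb_left:
  assumes l: "l \<in> V"
  shows "pmult (gp_emb dA l a) y (u, gs, ls) =
    (if (u, gs, ls) \<in> Idx \<and> u = l
     then amult (cA l) (dA l) a (\<lambda>q. y (l, gs, q # tl ls)) (hd ls) else 0)"
proof (cases "(u, gs, ls) \<in> Idx")
  case False
  then show ?thesis by (simp add: gp_mult_outside)
next
  case K: True
  have "pmult (gp_emb dA l a) y (u, gs, ls)
      = (\<Sum>I\<in>Idx. gp_emb dA l a I * (\<Sum>J\<in>Idx. y J * gp_bprod tgt cA I J (u, gs, ls)))"
    using K by (simp add: gp_mult_def sum_distrib_left mult.assoc)
  also have "\<dots> = (\<Sum>p<dA l. a p * (\<Sum>J\<in>Idx. y J * gp_bprod tgt cA (l, [], [p]) J (u, gs, ls)))"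
    using l by (rule sum_gp_emb)
  also have "\<dots> = (if u = l then \<Sum>p<dA l. \<Sum>q<dA l. a p * y (l, gs, q # tl ls) * cA l p q (hd ls)
      else 0)"
    using K by (simp add: sum_gp_bprod_trivial_left sum_distrib_left mult.assoc)
  also have "\<dots> = (if u = l then amult (cA l) (dA l) a (\<lambda>q. y (l, gs, q # tl ls)) (hd ls) else 0)"
  proof -
    have "u = l \<Longrightarrow> hd ls < dA l"
      using K by (cases ls) (auto simp: gp_index_iff)
    then show ?thesis by (simp add: amult_def)
  qed
  finally show ?thesis using K by simp
qed

lemma pmult_emb_right:
  assumes l: "l \<in> V"
  shows "pmult x (gp_emb dA l a) (u, gs, ls) =
    (if (u, gs, ls) \<in> Idx \<and> pend tgt u gs = l
     then amult (cA l) (dA l) (\<lambda>p. x (u, gs, butlast ls @ [p])) a (last ls) else 0)"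
proof (cases "(u, gs, ls) \<in> Idx")
  case False
  then show ?thesis by (simp add: gp_mult_outside)
next
  case K: True
  have "pmult x (gp_emb dA l a) (u, gs, ls)
      = (\<Sum>I\<in>Idx. \<Sum>J\<in>Idx. x I * gp_emb dA l a J * gp_bprod tgt cA I J (u, gs, ls))"
    using K by (simp add: gp_mult_def)
  also have "\<dots> = (\<Sum>J\<in>Idx. \<Sum>I\<in>Idx. x I * gp_emb dA l a J * gp_bprod tgt cA I J (u, gs, ls))"
    by (rule sum.swap)
  also have "\<dots> = (\<Sum>J\<in>Idx. gp_emb dA l a J * (\<Sum>I\<in>Idx. x I * gp_bprod tgt cA I J (u, gs, ls)))"
    by (simp add: sum_distrib_left ac_simps)
  also have "\<dots> = (\<Sum>m<dA l. a m * (\<Sum>I\<in>Idx. x I * gp_bprod tgt cA I (l, [], [m]) (u, gs, ls)))"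
    using l by (rule sum_gp_emb)
  also have "\<dots> = (if pend tgt u gs = l
      then \<Sum>m<dA l. \<Sum>p<dA l. a m * x (u, gs, butlast ls @ [p]) * cA l p m (last ls) else 0)"
    using K by (simp add: sum_gp_bprod_trivial_right sum_distrib_left mult.assoc)
  also have "\<dots> = (if pend tgt u gs = l
      then amult (cA l) (dA l) (\<lambda>p. x (u, gs, butlast ls @ [p])) a (last ls) else 0)"
  proof -
    have "pend tgt u gs = l \<Longrightarrow> last ls < dA l"
    proof -
      assume "pend tgt u gs = l"
      moreover from K have "length ls = Suc (length gs)" "ls ! length gs < dA (pverts tgt u gs ! length gs)"
        by (auto simp: gp_index_iff)
      moreover have "last ls = ls ! length gs"
        using \<open>length ls = Suc (length gs)\<close> by (cases ls rule: rev_cases) (auto simp: nth_append)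
      ultimately show "last ls < dA l"
        by (simp add: pverts_nth_length)
    qed
    moreover have "(\<Sum>m<dA l. \<Sum>p<dA l. a m * x (u, gs, butlast ls @ [p]) * cA l p m (last ls))
        = (\<Sum>p<dA l. \<Sum>m<dA l. x (u, gs, butlast ls @ [p]) * a m * cA l p m (last ls))"
      by (subst sum.swap) (simp add: ac_simps)
    ultimately show ?thesis by (simp add: amult_def)
  qed
  finally show ?thesis using K by simp
qed


lemma pmult_unit_right:
  assumes l: "l \<in> V" and x: "x \<in> Car"
  shows "pmult x (gp_emb dA l (uA l)) =
    (\<lambda>(u, gs, ls). if (u, gs, ls) \<in> Idx \<and> pend tgt u gs = l then x (u, gs, ls) else 0)"
proof (intro ext, clarify)
  fix u gs ls
  show "pmult x (gp_emb dA l (uA l)) (u, gs, ls) =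
    (if (u, gs, ls) \<in> Idx \<and> pend tgt u gs = l then x (u, gs, ls) else 0)"
  proof (cases "(u, gs, ls) \<in> Idx \<and> pend tgt u gs = l")
    case False
    then show ?thesis by (auto simp: pmult_emb_right[OF l])
  next
    case True
    then have len: "length ls = length gs + 1"
      by (auto simp: gp_index_iff)
    have "(\<lambda>p. x (u, gs, butlast ls @ [p])) \<in> vec (dA l)"
      unfolding vec_def
    proof clarify
      fix p assume p: "dA l \<le> p"
      have "(u, gs, butlast ls @ [p]) \<notin> Idx"
      proof
        assume "(u, gs, butlast ls @ [p]) \<in> Idx"
        then have "(butlast ls @ [p]) ! length gs < dA (pverts tgt u gs ! length gs)"
          using len by (simp add: gp_index_iff)
        then show False
          using p True len by (simp add: nth_append pverts_nth_length)
      qed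
      then show "x (u, gs, butlast ls @ [p]) = 0"
        using x by (simp add: gp_carrier_def)
    qed
    then have "amult (cA l) (dA l) (\<lambda>p. x (u, gs, butlast ls @ [p])) (uA l) = (\<lambda>p. x (u, gs, butlast ls @ [p]))"
      using algebras l by (simp add: fd_algebra_def)
    moreover have "butlast ls @ [last ls] = ls"
      using len by (cases ls rule: rev_cases) auto
    ultimately show ?thesis
      using True by (simp only: pmult_emb_right[OF l] if_True)
  qed
qed

end

section \<open>The representation of the projective \<open>P(i,j)\<close>\<close>

locale projective_component = gen_path_algebra V E src tgt dA cA uA
  for V :: "'v set" and E :: "'e set" and src tgt :: "'e \<Rightarrow> 'v"
    and dA :: "'v \<Rightarrow> nat" and cA :: "'v \<Rightarrow> nat \<Rightarrow> nat \<Rightarrow> nat \<Rightarrow> 'k::field"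
    and uA :: "'v \<Rightarrow> nat \<Rightarrow> 'k" +
  fixes e :: "'v \<Rightarrow> nat \<Rightarrow> nat \<Rightarrow> 'k" and i :: 'v and j :: nat
  assumes i: "i \<in> V" and idempotent: "idempotent_in (dA i) (cA i) (e i j)"
begin

abbreviation "eA \<equiv> rideal (dA i) (cA i) (e i j)"
abbreviation "M \<equiv> rep_component V E src tgt dA cA uA (gp_proj V E src tgt dA cA e i j)"

text \<open>The element \<open>e\<^sub>i\<^sub>j y 1\<^sub>l\<close> of \<open>M l\<close> (products taken in the path algebra), in coordinates.\<close>
definition proj_elem :: "'v \<Rightarrow> ('v \<times> 'e list \<times> nat list \<Rightarrow> 'k) \<Rightarrow> 'v \<times> 'e list \<times> nat list \<Rightarrow> 'k" where
  "proj_elem l y = (\<lambda>(u, gs, ls). if (u, gs, ls) \<in> Idx \<and> u = i \<and> pend tgt u gs = l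
      then amult (cA i) (dA i) (e i j) (\<lambda>q. y (i, gs, q # tl ls)) (hd ls) else 0)"

lemma component_eq_image:
  assumes l: "l \<in> V"
  shows "M l = proj_elem l ` Car"
proof -
  have sandwich: "pmult (pmult (gp_emb dA i (e i j)) y) (gp_emb dA l (uA l)) = proj_elem l y" for y
  proof -
    have "pmult (gp_emb dA i (e i j)) y \<in> Car"
      by (simp add: gp_carrier_def gp_mult_outside)
    then show ?thesis
      by (auto simp: pmult_unit_right[OF l] proj_elem_def pmult_emb_left[OF i])
  qed
  then show ?thesis
    by (auto simp: rep_component_def gp_proj_def) (metis sandwich)
qed

lemma component_at_source: "M i = gp_emb dA i ` eA"
proof -
  have proj_elem_at_source: "proj_elem i y = gp_emb dA i (amult (cA i) (dA i) (e i j) (\<lambda>q. y (i, [], [q])))" for y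
  proof (intro ext, clarify)
    fix u gs ls
    have "qpath V E src tgt i gs \<Longrightarrow> pend tgt i gs = i \<Longrightarrow> gs = []"
      using acyclic by (auto simp: acyclic_quiver_def)
    then have "(u, gs, ls) \<in> Idx \<and> u = i \<and> pend tgt u gs = i
        \<longleftrightarrow> u = i \<and> gs = [] \<and> length ls = 1 \<and> hd ls < dA i"
      using i by (cases ls) (auto simp: gp_index_iff)
    moreover have "length ls = 1 \<Longrightarrow> tl ls = []"
      by (cases ls) auto
    ultimately show "proj_elem i y (u, gs, ls) = gp_emb dA i (amult (cA i) (dA i) (e i j) (\<lambda>q. y (i, [], [q]))) (u, gs, ls)"
      by (auto simp: proj_elem_def gp_emb_simp)
  qed
  have "proj_elem i ` Car = gp_emb dA i ` eA"
  proof
    show "proj_elem i ` Car \<subseteq> gp_emb dA i ` eA"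
      by (auto simp: proj_elem_at_source intro!: imageI amult_in_rideal)
    show "gp_emb dA i ` eA \<subseteq> proj_elem i ` Car"
    proof
      fix z :: "'v \<times> 'e list \<times> nat list \<Rightarrow> 'k" assume "z \<in> gp_emb dA i ` eA"
      then obtain a where z: "z = gp_emb dA i (amult (cA i) (dA i) (e i j) a)" "a \<in> vec (dA i)"
        by (auto simp: rideal_def)
      define y where "y = (\<lambda>(u, gs :: 'e list, ls). if u = i \<and> gs = [] \<and> length ls = 1 then a (hd ls) else 0)"
      have "y \<in> Car"
        using \<open>a \<in> vec (dA i)\<close> i
        by (auto simp: gp_carrier_def y_def gp_index_iff vec_def length_Suc_conv)
      moreover have "proj_elem i y = gp_emb dA i (amult (cA i) (dA i) (e i j) a)"
        unfolding proj_elem_at_source by (simp add: y_def)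
      ultimately show "z \<in> proj_elem i ` Car"
        unfolding z by (metis imageI)
    qed
  qed
  then show ?thesis
    using component_eq_image[OF i] by simp
qed

lemma component_without_paths:
  assumes l: "l \<in> V" and no_path: "\<nexists>\<gamma>. qpath V E src tgt i \<gamma> \<and> pend tgt i \<gamma> = l"
  shows "M l = {\<lambda>_. 0}"
proof -
  have "proj_elem l y = (\<lambda>_. 0)" for y
    using no_path by (auto simp: proj_elem_def gp_index_iff fun_eq_iff)
  moreover have "(\<lambda>_. 0) \<in> Car"
    by (simp add: gp_carrier_def)
  ultimately show ?thesis
    using component_eq_image[OF l] by auto
qed

definition paths_to :: "'v \<Rightarrow> 'e list set" where
  "paths_to l = {\<gamma>. qpath V E src tgt i \<gamma> \<and> pend tgt i \<gamma> = l}"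

definition inner_indices :: "'e list \<Rightarrow> nat list set" where
  "inner_indices \<gamma> = {ms. length ms = length \<gamma> - 1
     \<and> (\<forall>t<length \<gamma> - 1. ms ! t < dA (pverts tgt i \<gamma> ! Suc t))}"

definition slice :: "('v \<times> 'e list \<times> nat list \<Rightarrow> 'k) \<Rightarrow> 'e list \<Rightarrow> nat list \<Rightarrow> nat \<Rightarrow> nat \<Rightarrow> 'k" where
  "slice w \<gamma> ms m = (\<lambda>q. w (i, \<gamma>, q # ms @ [m]))"

lemma finite_paths_to: "finite (paths_to l)"
  using finite_qpaths[OF quiver acyclic, of i] by (rule finite_subset[rotated]) (auto simp: paths_to_def)

lemma finite_card_inner_indices:
  "finite (inner_indices \<gamma>) \<and> card (inner_indices \<gamma>) = (\<Prod>t\<in>{1..<length \<gamma>}. dA (pverts tgt i \<gamma> ! t))"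
proof -
  have "(\<Prod>t<length \<gamma> - 1. dA (pverts tgt i \<gamma> ! Suc t)) = (\<Prod>t\<in>Suc ` {..<length \<gamma> - 1}. dA (pverts tgt i \<gamma> ! t))"
    by (simp add: prod.reindex)
  also have "Suc ` {..<length \<gamma> - 1} = {1..<length \<gamma>}"
    by (cases "length \<gamma>") (auto simp: image_Suc_lessThan atLeastLessThanSuc_atLeastAtMost)
  finally show ?thesis
    unfolding inner_indices_def using card_lists_bounded[of "length \<gamma> - 1" "\<lambda>t. dA (pverts tgt i \<gamma> ! Suc t)"]
    by simp
qed

lemma gp_index_path_iff:
  assumes \<gamma>: "\<gamma> \<in> paths_to l" "\<gamma> \<noteq> []"
  shows "(i, \<gamma>, q # ms @ [m]) \<in> Idx \<longleftrightarrow> q < dA i \<and> ms \<in> inner_indices \<gamma> \<and> m < dA l"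
proof -
  have p: "qpath V E src tgt i \<gamma>" and last: "pverts tgt i \<gamma> ! length \<gamma> = l"
    using \<gamma> by (auto simp: paths_to_def pverts_nth_length)
  have "(\<forall>t<Suc (Suc (length ms)). (q # ms @ [m]) ! t < dA (pverts tgt i \<gamma> ! t))
      \<longleftrightarrow> q < dA i \<and> (\<forall>t<length ms. ms ! t < dA (pverts tgt i \<gamma> ! Suc t))
          \<and> m < dA (pverts tgt i \<gamma> ! Suc (length ms))"
    by (subst All_less_Suc2, subst All_less_Suc) (auto simp: nth_append)
  then show ?thesis
    using p last \<gamma>(2) by (auto simp: gp_index_iff inner_indices_def)
qed


lemma paths_to_nonempty: "\<gamma> \<in> paths_to l \<Longrightarrow> l \<noteq> i \<Longrightarrow> \<gamma> \<noteq> []"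
  by (auto simp: paths_to_def)

lemma slice_proj_elem:
  assumes "\<gamma> \<in> paths_to l" "\<gamma> \<noteq> []" "ms \<in> inner_indices \<gamma>" "m < dA l"
  shows "slice (proj_elem l y) \<gamma> ms m = amult (cA i) (dA i) (e i j) (slice y \<gamma> ms m)"
proof
  fix q
  show "slice (proj_elem l y) \<gamma> ms m q = amult (cA i) (dA i) (e i j) (slice y \<gamma> ms m) q"
    using gp_index_path_iff[OF assms(1,2), of q ms m] assms
    by (cases "q < dA i") (auto simp: slice_def proj_elem_def paths_to_def amult_def)
qed

lemma slice_in_eA:
  assumes "l \<in> V" "x \<in> M l" "\<gamma> \<in> paths_to l" "\<gamma> \<noteq> []" "ms \<in> inner_indices \<gamma>" "m < dA l"
  shows "slice x \<gamma> ms m \<in> eA"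
  using assms slice_proj_elem amult_in_rideal by (auto simp: component_eq_image)

lemma component_support:
  assumes l: "l \<in> V" "l \<noteq> i" and x: "x \<in> M l" and nonzero: "x K \<noteq> 0"
  obtains \<gamma> q ms m where "K = (i, \<gamma>, q # ms @ [m])" "\<gamma> \<in> paths_to l" "ms \<in> inner_indices \<gamma>"
    "m < dA l"
proof -
  obtain y where "x = proj_elem l y"
    using x component_eq_image[OF l(1)] by auto
  moreover obtain u gs ls where K: "K = (u, gs, ls)"
    by (cases K)
  ultimately have in_Idx: "(u, gs, ls) \<in> Idx" and "u = i" and \<gamma>: "gs \<in> paths_to l"
    using nonzero by (auto simp: proj_elem_def paths_to_def gp_index_iff split: if_splits)
  have "gs \<noteq> []"
    using paths_to_nonempty[OF \<gamma> l(2)] .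
  moreover have "length ls = length gs + 1"
    using in_Idx by (simp add: gp_index_iff)
  ultimately obtain q ms m where ls: "ls = q # ms @ [m]"
    by (cases ls rule: rev_cases; cases "butlast ls") (auto simp: Cons_eq_append_conv)
  show ?thesis
    using that[of gs q ms m] in_Idx gp_index_path_iff[OF \<gamma> \<open>gs \<noteq> []\<close>] \<gamma> K ls \<open>u = i\<close> by simp
qed

lemma finite_card_coord_index:
  assumes "finite B"
  shows "finite (SIGMA \<gamma>:paths_to l. B \<times> inner_indices \<gamma>)"
    "card (SIGMA \<gamma>:paths_to l. B \<times> inner_indices \<gamma>)
      = (\<Sum>\<gamma>\<in>paths_to l. card B * (\<Prod>t\<in>{1..<length \<gamma>}. dA (pverts tgt i \<gamma> ! t)))"
  using assms finite_paths_to finite_card_inner_indices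
  by (auto simp: card_cartesian_product)

lemma slice_right_mult:
  assumes l: "l \<in> V" "l \<noteq> i" and x: "x \<in> M l"
    and \<gamma>: "\<gamma> \<in> paths_to l" "ms \<in> inner_indices \<gamma>" "m < dA l"
  shows "slice (pmult x (gp_emb dA l a)) \<gamma> ms m
    = (\<Sum>p<dA l. vscale (\<Sum>r<dA l. a r * cA l p r m) (slice x \<gamma> ms p))"
proof
  fix q
  have \<gamma>_ne: "\<gamma> \<noteq> []"
    using paths_to_nonempty[OF \<gamma>(1) l(2)] .
  show "slice (pmult x (gp_emb dA l a)) \<gamma> ms m q
      = (\<Sum>p<dA l. vscale (\<Sum>r<dA l. a r * cA l p r m) (slice x \<gamma> ms p)) q"
  proof (cases "q < dA i")
    case True
    have "(i, \<gamma>, q # ms @ [m]) \<in> Idx" "pend tgt i \<gamma> = l"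
      using gp_index_path_iff[OF \<gamma>(1) \<gamma>_ne] True \<gamma> by (auto simp: paths_to_def)
    moreover have "butlast (q # ms @ [m]) = q # ms"
      by (simp add: butlast_append)
    ultimately show ?thesis
      using \<gamma>(3) by (simp add: slice_def pmult_emb_right[OF l(1)] amult_def sum_apply vscale_def
          sum_distrib_left sum_distrib_right ac_simps)
  next
    case False
    have "slice x \<gamma> ms p \<in> vec (dA i)" if "p < dA l" for p
      using slice_in_eA[OF l(1) x \<gamma>(1) \<gamma>_ne \<gamma>(2) that] rideal_subset_vec by blast
    then have "slice x \<gamma> ms p q = 0" if "p < dA l" for p
      using False that by (simp add: vec_def)
    moreover have "(i, \<gamma>, q # ms @ [m]) \<notin> Idx"
      using gp_index_path_iff[OF \<gamma>(1) \<gamma>_ne] False by simp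
    ultimately show ?thesis
      by (simp add: slice_def pmult_emb_right[OF l(1)] sum_apply vscale_def)
  qed
qed

end

locale component_coordinates = projective_component V E src tgt dA cA uA e i j
  for V :: "'v set" and E :: "'e set" and src tgt :: "'e \<Rightarrow> 'v"
    and dA :: "'v \<Rightarrow> nat" and cA :: "'v \<Rightarrow> nat \<Rightarrow> nat \<Rightarrow> nat \<Rightarrow> 'k::field"
    and uA :: "'v \<Rightarrow> nat \<Rightarrow> 'k" and e :: "'v \<Rightarrow> nat \<Rightarrow> nat \<Rightarrow> 'k" and i :: 'v and j :: nat +
  fixes l :: 'v and B :: "(nat \<Rightarrow> 'k) set" and g :: "nat \<Rightarrow> 'e list \<times> (nat \<Rightarrow> 'k) \<times> nat list"
  assumes l: "l \<in> V" "l \<noteq> i"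
    and basis: "finite B" "vs.independent B" "eA = vs.span B"
    and enumeration: "bij_betw g {0..<card (SIGMA \<gamma>:paths_to l. B \<times> inner_indices \<gamma>)}
      (SIGMA \<gamma>:paths_to l. B \<times> inner_indices \<gamma>)"
begin

abbreviation "N \<equiv> card (SIGMA \<gamma>:paths_to l. B \<times> inner_indices \<gamma>)"
abbreviation "rep \<equiv> vs.representation B"

definition coords :: "('v \<times> 'e list \<times> nat list \<Rightarrow> 'k) \<Rightarrow> nat \<Rightarrow> nat \<Rightarrow> 'k" where
  "coords x t m = (if t < N \<and> m < dA l then (case g t of (\<gamma>, b, ms) \<Rightarrow> rep (slice x \<gamma> ms m) b) else 0)"

lemma enumeration_at:
  assumes "t < N" "g t = (\<gamma>, b, ms)"
  shows "\<gamma> \<in> paths_to l" "\<gamma> \<noteq> []" "b \<in> B" "ms \<in> inner_indices \<gamma>"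
  using bij_betw_apply[OF enumeration, of t] assms paths_to_nonempty l(2) by auto

lemma coords_in_free_rmod: "coords x \<in> free_rmod (dA l) N"
  by (auto simp: coords_def free_rmod_def vec_def vzero_def fun_eq_iff)

lemma coords_eqI:
  assumes "F \<in> free_rmod (dA l) N"
    and "\<And>t \<gamma> b ms m. t < N \<Longrightarrow> g t = (\<gamma>, b, ms) \<Longrightarrow> m < dA l \<Longrightarrow> rep (slice x \<gamma> ms m) b = F t m"
  shows "coords x = F"
proof (intro ext)
  fix t m
  show "coords x t m = F t m"
  proof (cases "t < N \<and> m < dA l")
    case True
    then show ?thesis
      using assms(2) by (cases "g t") (simp add: coords_def)
  next
    case False
    then show ?thesis
      using assms(1) by (cases "t < N") (auto simp: coords_def free_rmod_def vec_def vzero_def)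
  qed
qed

lemma slice_in_span:
  "x \<in> M l \<Longrightarrow> \<gamma> \<in> paths_to l \<Longrightarrow> ms \<in> inner_indices \<gamma> \<Longrightarrow> m < dA l \<Longrightarrow> slice x \<gamma> ms m \<in> vs.span B"
  using slice_in_eA[OF l(1)] paths_to_nonempty l(2) basis(3) by auto

lemma inj_on_coords: "inj_on coords (M l)"
proof
  fix x y assume x: "x \<in> M l" and y: "y \<in> M l" and eq: "coords x = coords y"
  show "x = y"
  proof
    fix K
    show "x K = y K"
    proof (cases "x K = 0 \<and> y K = 0")
      case False
      then obtain \<gamma> q ms m where K: "K = (i, \<gamma>, q # ms @ [m])" and
        \<gamma>: "\<gamma> \<in> paths_to l" "ms \<in> inner_indices \<gamma>" "m < dA l"
        using component_support[OF l x] component_support[OF l y] by blast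
      have "slice x \<gamma> ms m = slice y \<gamma> ms m"
      proof (rule vs.representation_inj_on_span[OF basis(1,2) slice_in_span[OF x \<gamma>] slice_in_span[OF y \<gamma>]])
        fix b assume "b \<in> B"
        then have "(\<gamma>, b, ms) \<in> (SIGMA \<gamma>:paths_to l. B \<times> inner_indices \<gamma>)"
          using \<gamma> by simp
        then obtain t where t: "t < N" "g t = (\<gamma>, b, ms)"
          using enumeration by (force simp: bij_betw_def)
        have "coords x t m = coords y t m"
          using eq by simp
        then show "rep (slice x \<gamma> ms m) b = rep (slice y \<gamma> ms m) b"
          using t \<gamma>(3) by (simp add: coords_def)
      qed
      then show ?thesis
        by (simp add: K slice_def fun_eq_iff)
    qed simp
  qed
qed


lemma coords_vadd:
  assumes x: "x \<in> M l" and y: "y \<in> M l"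
  shows "coords (vadd x y) = vadd (coords x) (coords y)"
proof (rule coords_eqI)
  show "vadd (coords x) (coords y) \<in> free_rmod (dA l) N"
    using coords_in_free_rmod[of x] coords_in_free_rmod[of y]
    by (auto simp: free_rmod_def vec_def vadd_def vzero_def fun_eq_iff)
  fix t \<gamma> b ms m assume t: "t < N" "g t = (\<gamma>, b, ms)" and m: "m < dA l"
  note \<gamma> = enumeration_at[OF t]
  have "slice (vadd x y) \<gamma> ms m = slice x \<gamma> ms m + slice y \<gamma> ms m"
    by (simp add: slice_def vadd_def fun_eq_iff)
  then show "rep (slice (vadd x y) \<gamma> ms m) b = vadd (coords x) (coords y) t m"
    using vs.representation_add[OF basis(2) slice_in_span[OF y \<gamma>(1,4) m] slice_in_span[OF x \<gamma>(1,4) m]]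
      t m by (simp add: coords_def vadd_def)
qed

lemma coords_vscale:
  assumes x: "x \<in> M l"
  shows "coords (vscale c x) = (\<lambda>t. vscale c (coords x t))"
proof (rule coords_eqI)
  show "(\<lambda>t. vscale c (coords x t)) \<in> free_rmod (dA l) N"
    using coords_in_free_rmod[of x]
    by (auto simp: free_rmod_def vec_def vscale_def vzero_def fun_eq_iff)
  fix t \<gamma> b ms m assume t: "t < N" "g t = (\<gamma>, b, ms)" and m: "m < dA l"
  note \<gamma> = enumeration_at[OF t]
  have "slice (vscale c x) \<gamma> ms m = vscale c (slice x \<gamma> ms m)"
    by (simp add: slice_def vscale_def fun_eq_iff)
  then show "rep (slice (vscale c x) \<gamma> ms m) b = vscale c (coords x t) m"
    using vs.representation_scale[OF basis(2) slice_in_span[OF x \<gamma>(1,4) m]] t m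
    by (simp add: coords_def vscale_def)
qed

lemma coords_right_mult:
  assumes x: "x \<in> M l"
  shows "coords (pmult x (gp_emb dA l a)) = (\<lambda>t. amult (cA l) (dA l) (coords x t) a)"
proof (rule coords_eqI)
  show "(\<lambda>t. amult (cA l) (dA l) (coords x t) a) \<in> free_rmod (dA l) N"
    unfolding free_rmod_def
  proof (intro CollectI conjI allI impI)
    fix t assume "N \<le> t"
    then show "amult (cA l) (dA l) (coords x t) a = vzero"
      by (simp add: amult_def coords_def vzero_def fun_eq_iff)
  qed (rule amult_in_vec)
  fix t \<gamma> b ms m assume t: "t < N" "g t = (\<gamma>, b, ms)" and m: "m < dA l"
  note \<gamma> = enumeration_at[OF t]
  have "rep (slice (pmult x (gp_emb dA l a)) \<gamma> ms m) b
      = (\<Sum>p<dA l. (\<Sum>r<dA l. a r * cA l p r m) * rep (slice x \<gamma> ms p) b)"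
    unfolding slice_right_mult[OF l x \<gamma>(1,4) m]
    by (rule vs.representation_lincomb[OF basis(2)]) (simp add: slice_in_span[OF x \<gamma>(1,4)])
  also have "\<dots> = amult (cA l) (dA l) (coords x t) a m"
    using t m by (simp add: amult_def coords_def sum_distrib_left sum_distrib_right ac_simps)
  finally show "rep (slice (pmult x (gp_emb dA l a)) \<gamma> ms m) b = amult (cA l) (dA l) (coords x t) a m" .
qed

lemma coords_surj:
  assumes F: "F \<in> free_rmod (dA l) N"
  shows "\<exists>x\<in>M l. coords x = F"
proof -
  define index where "index = the_inv_into {0..<N} g"
  define slice_of where "slice_of \<gamma> ms m = (\<Sum>b\<in>B. vscale (F (index (\<gamma>, b, ms)) m) b)" for \<gamma> ms m
  have slice_of_in_eA: "slice_of \<gamma> ms m \<in> eA" for \<gamma> ms m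
    unfolding slice_of_def basis(3) by (intro vs.span_sum vs.span_scale vs.span_base)
  define y where "y = (\<lambda>(u, gs, ls). if (u, gs, ls) \<in> Idx \<and> u = i \<and> pend tgt i gs = l
    then slice_of gs (butlast (tl ls)) (last ls) (hd ls) else 0)"
  have "proj_elem l y \<in> M l"
    using component_eq_image[OF l(1)] by (auto simp: y_def gp_carrier_def)
  moreover have "coords (proj_elem l y) = F"
  proof (rule coords_eqI[OF F])
    fix t \<gamma> b ms m assume t: "t < N" "g t = (\<gamma>, b, ms)" and m: "m < dA l"
    note \<gamma> = enumeration_at[OF t]
    have "slice (proj_elem l y) \<gamma> ms m = amult (cA i) (dA i) (e i j) (slice y \<gamma> ms m)"
      using slice_proj_elem[OF \<gamma>(1,2,4) m] .
    also have "\<dots> = amult (cA i) (dA i) (e i j) (slice_of \<gamma> ms m)"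
    proof (rule amult_cong)
      fix q assume "q < dA i"
      then have "(i, \<gamma>, q # ms @ [m]) \<in> Idx"
        using gp_index_path_iff[OF \<gamma>(1,2)] \<gamma>(4) m by simp
      then show "slice y \<gamma> ms m q = slice_of \<gamma> ms m q"
        using \<gamma>(1) by (simp add: slice_def y_def paths_to_def)
    qed simp
    also have "\<dots> = slice_of \<gamma> ms m"
      using algebras i by (intro idempotent_fixes_rideal[OF _ idempotent slice_of_in_eA, of "uA i"]) simp
    finally have "rep (slice (proj_elem l y) \<gamma> ms m) b = F (index (\<gamma>, b, ms)) m"
      using \<gamma>(3) by (simp add: slice_of_def vs.representation_sum_scale[OF basis(1,2)])
    also have "index (\<gamma>, b, ms) = t"
      unfolding index_def using t bij_betw_imp_inj_on[OF enumeration]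
      by (metis atLeastLessThan_iff the_inv_into_f_f zero_le)
    finally show "rep (slice (proj_elem l y) \<gamma> ms m) b = F t m" .
  qed
  ultimately show ?thesis by blast
qed

end

context projective_component
begin

lemma component_free_module:
  assumes l: "l \<in> V" "l \<noteq> i"
  shows "\<exists>f. bij_betw f (M l) (free_rmod (dA l)
              (\<Sum>\<gamma>\<in>paths_to l. kdim eA * (\<Prod>t\<in>{1..<length \<gamma>}. dA (pverts tgt i \<gamma> ! t))))
    \<and> (\<forall>x\<in>M l. \<forall>y\<in>M l. f (vadd x y) = vadd (f x) (f y))
    \<and> (\<forall>c x. x \<in> M l \<longrightarrow> f (vscale c x) = (\<lambda>t. vscale c (f x t)))
    \<and> (\<forall>x\<in>M l. \<forall>a\<in>vec (dA l). f (pmult x (gp_emb dA l a)) = (\<lambda>t. amult (cA l) (dA l) (f x t) a))"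
proof -
  obtain B where B: "finite B" "vs.independent B" "eA = vs.span B" "card B = kdim eA"
    using subspace_vec_obtain_basis[OF subspace_rideal rideal_subset_vec] by metis
  let ?T = "SIGMA \<gamma>:paths_to l. B \<times> inner_indices \<gamma>"
  obtain g where g: "bij_betw g {0..<card ?T} ?T"
    using ex_bij_betw_nat_finite[OF finite_card_coord_index(1)[OF B(1)]] by blast
  interpret component_coordinates V E src tgt dA cA uA e i j l B g
    using l B g by unfold_locales auto
  have "bij_betw coords (M l) (free_rmod (dA l) N)"
    unfolding bij_betw_def using inj_on_coords coords_in_free_rmod coords_surj by blast
  moreover have "N = (\<Sum>\<gamma>\<in>paths_to l. kdim eA * (\<Prod>t\<in>{1..<length \<gamma>}. dA (pverts tgt i \<gamma> ! t)))"
    using finite_card_coord_index(2)[OF B(1)] B(4) by simp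
  ultimately show ?thesis
    using coords_vadd coords_vscale coords_right_mult by auto
qed

end

theorem proposition5p3:
  fixes V :: "'v set" and E :: "'e set" and src tgt :: "'e \<Rightarrow> 'v"
    and dA :: "'v \<Rightarrow> nat" and cA :: "'v \<Rightarrow> nat \<Rightarrow> nat \<Rightarrow> nat \<Rightarrow> 'k::alg_closed_field"
    and uA :: "'v \<Rightarrow> nat \<Rightarrow> 'k" and e :: "'v \<Rightarrow> nat \<Rightarrow> nat \<Rightarrow> 'k" and s :: "'v \<Rightarrow> nat"
    and i :: 'v and j :: nat
  assumes quiver: "finite_quiver V E src tgt"
    and acyclic: "acyclic_quiver V E src tgt"
    and algebras: "\<forall>v\<in>V. fd_algebra (dA v) (cA v) (uA v)"
    and idems: "\<forall>v\<in>V. complete_prim_orth (dA v) (cA v) (uA v) (e v) (s v)"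
    and basic: "\<forall>v\<in>V. basic_algebra (dA v) (cA v) (e v) (s v)"
    and i: "i \<in> V" and j: "1 \<le> j" "j \<le> s i"
  defines "M \<equiv> rep_component V E src tgt dA cA uA (gp_proj V E src tgt dA cA e i j)"
    and "n \<equiv> (\<lambda>l. \<Sum>\<gamma>\<in>{bs. qpath V E src tgt i bs \<and> pend tgt i bs = l}.
               kdim (rideal (dA i) (cA i) (e i j)) * (\<Prod>t\<in>{1..<length \<gamma>}. dA (pverts tgt i \<gamma> ! t)))"
  shows "M i = gp_emb dA i ` rideal (dA i) (cA i) (e i j)
     \<and> (\<forall>l\<in>V. l \<noteq> i \<longrightarrow>
          (\<exists>f. bij_betw f (M l) (free_rmod (dA l) (n l))
             \<and> (\<forall>x\<in>M l. \<forall>y\<in>M l. f (vadd x y) = vadd (f x) (f y))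
             \<and> (\<forall>c x. x \<in> M l \<longrightarrow> f (vscale c x) = (\<lambda>t. vscale c (f x t)))
             \<and> (\<forall>x\<in>M l. \<forall>a\<in>vec (dA l).
                  f (gp_mult V E src tgt dA cA x (gp_emb dA l a)) = (\<lambda>t. amult (cA l) (dA l) (f x t) a)))
          \<and> ((\<nexists>\<gamma>. qpath V E src tgt i \<gamma> \<and> pend tgt i \<gamma> = l) \<longrightarrow> M l = {\<lambda>_. 0}))"
proof -
  have "idempotent_in (dA i) (cA i) (e i j)"
    using idems i j by (auto simp: complete_prim_orth_def primitive_idempotent_def)
  then interpret projective_component V E src tgt dA cA uA e i j
    using quiver acyclic algebras i by unfold_locales auto
  show ?thesis
    unfolding M_def n_def
    using component_at_source component_free_module component_without_paths
    by (simp add: paths_to_def)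
qed

end
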